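(* Let $\rho\in\mathbb R$, let $\kappa_{\mathbf a}:\mathbb H_\rho\times\mathbb H_\rho\to\mathbb C$ be a positive semi-definite Dirichlet series kernel with coefficient matrix $\mathbf a=(a_{m,n})$ and associated reproducing kernel Hilbert space $\mathscr H_{\mathbf a}$. Let $f(s)=\sum_{n\ge1}\hat f(n)n^{-s}$ be a Dirichlet series convergent at every $s\in\mathbb H_\rho$. Then $f\in\mathscr H_{\mathbf a}$ if and only if there exists a real number $c\ge0$ such that the matrix $\big(c^2a_{m,n}-\hat f(m)\overline{\hat f(n)}\big)_{m,n=1}^\infty$ is formally positive semi-definite.
   Context: $\mathbb H_\rho=\{\Re s>\rho\}$. $\kappa_{\mathbf a}(s,u)=\sum_{m,n\ge1}a_{m,n}m^{-s}n^{-\bar u}$ is a Dirichlet series kernel on $\mathbb H_\rho$ if $(s,u)\mapsto\kappa_{\mathbf a}(s,\bar u)$ is regularly convergent on $\mathbb H_\rho\times\mathbb H_\rho$ (the double series converges at each point and every row and column series converges there). $\mathscr H_{\mathbf a}$ is the Hilbert space of functions on $\mathbb H_\rho$ with $\kappa_{\mathbf a}(\cdot,t)\in\mathscr H_{\mathbf a}$ and $\langle f,\kappa_{\mathbf a}(\cdot,t)\rangle=f(t)$. An infinite matrix is formally positive semi-definite if all its finite principal sections $(x_{m,n})_{m,n\in F}$, $F\subset\mathbb N$ finite, are positive semi-definite. *)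

theory Defs
  imports "HOL-Analysis.Analysis"
begin

definition halfplane :: "real \<Rightarrow> complex set" where
  "halfplane \<rho> = {s. Re s > \<rho>}"

definition cnonneg :: "complex \<Rightarrow> bool" where
  "cnonneg z \<longleftrightarrow> Im z = 0 \<and> 0 \<le> Re z"

definition summable1 :: "(nat \<Rightarrow> complex) \<Rightarrow> bool" where
  "summable1 g \<longleftrightarrow> summable (\<lambda>n. if n = 0 then 0 else g n)"

definition suminf1 :: "(nat \<Rightarrow> complex) \<Rightarrow> complex" where
  "suminf1 g = (\<Sum>n. if n = 0 then 0 else g n)"

definition rect_sum :: "(nat \<Rightarrow> nat \<Rightarrow> complex) \<Rightarrow> nat \<times> nat \<Rightarrow> complex" where
  "rect_sum b = (\<lambda>(M, N). \<Sum>m\<in>{1..M}. \<Sum>n\<in>{1..N}. b m n)"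

definition regularly_convergent :: "(nat \<Rightarrow> nat \<Rightarrow> complex) \<Rightarrow> bool" where
  "regularly_convergent b \<longleftrightarrow>
     (\<exists>L. (rect_sum b \<longlongrightarrow> L) (sequentially \<times>\<^sub>F sequentially)) \<and>
     (\<forall>m\<ge>1. summable1 (\<lambda>n. b m n)) \<and>
     (\<forall>n\<ge>1. summable1 (\<lambda>m. b m n))"

definition dk_term :: "(nat \<Rightarrow> nat \<Rightarrow> complex) \<Rightarrow> complex \<Rightarrow> complex \<Rightarrow> nat \<Rightarrow> nat \<Rightarrow> complex" where
  "dk_term a s u m n = a m n * of_nat m powr (- s) * of_nat n powr (- cnj u)"

definition dkernel :: "(nat \<Rightarrow> nat \<Rightarrow> complex) \<Rightarrow> complex \<Rightarrow> complex \<Rightarrow> complex" where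
  "dkernel a s u = Lim (sequentially \<times>\<^sub>F sequentially) (rect_sum (dk_term a s u))"

text \<open>kappa_a is a Dirichlet series kernel on H_rho: (s,u) |-> kappa_a(s, conj u)
  is regularly convergent on H_rho x H_rho (equivalently the series of kappa_a(s,u)
  is regularly convergent for all s,u in H_rho, as conj preserves H_rho).\<close>
definition dirichlet_series_kernel :: "real \<Rightarrow> (nat \<Rightarrow> nat \<Rightarrow> complex) \<Rightarrow> bool" where
  "dirichlet_series_kernel \<rho> a \<longleftrightarrow>
     (\<forall>s\<in>halfplane \<rho>. \<forall>u\<in>halfplane \<rho>. regularly_convergent (dk_term a s (cnj u)))"

definition psd_kernel :: "complex set \<Rightarrow> (complex \<Rightarrow> complex \<Rightarrow> complex) \<Rightarrow> bool" where
  "psd_kernel D K \<longleftrightarrow>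
     (\<forall>F c. finite F \<and> F \<subseteq> D \<longrightarrow>
        cnonneg (\<Sum>t\<in>F. \<Sum>u\<in>F. c t * cnj (c u) * K u t))"

text \<open>Finite linear combinations of kernel functions, encoded by finitely supported
  coefficient functions w: the function s |-> sum_t w t * K(s,t), with squared norm
  ||sum_t w t K(.,t)||^2 = sum_{t,u} w t * conj (w u) * K(u,t).\<close>
definition supp_c :: "(complex \<Rightarrow> complex) \<Rightarrow> complex set" where
  "supp_c w = {t. w t \<noteq> 0}"

definition kcomb :: "(complex \<Rightarrow> complex \<Rightarrow> complex) \<Rightarrow> (complex \<Rightarrow> complex) \<Rightarrow> complex \<Rightarrow> complex" where
  "kcomb K w s = (\<Sum>t\<in>supp_c w. w t * K s t)"

definition knormsq :: "(complex \<Rightarrow> complex \<Rightarrow> complex) \<Rightarrow> (complex \<Rightarrow> complex) \<Rightarrow> real" where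
  "knormsq K w = Re (\<Sum>t\<in>supp_c w. \<Sum>u\<in>supp_c w. w t * cnj (w u) * K u t)"

text \<open>Membership in the reproducing kernel Hilbert space H(K) on D
  (Moore-Aronszajn construction): f is the pointwise limit on D of a norm-Cauchy
  sequence of finite linear combinations of the kernel functions K(.,t), t in D.\<close>
definition in_rkhs :: "complex set \<Rightarrow> (complex \<Rightarrow> complex \<Rightarrow> complex) \<Rightarrow> (complex \<Rightarrow> complex) \<Rightarrow> bool" where
  "in_rkhs D K f \<longleftrightarrow>
     (\<exists>W :: nat \<Rightarrow> complex \<Rightarrow> complex.
        (\<forall>k. finite (supp_c (W k)) \<and> supp_c (W k) \<subseteq> D) \<and>
        (\<forall>\<epsilon>>0. \<exists>N. \<forall>i\<ge>N. \<forall>j\<ge>N. knormsq K (\<lambda>t. W i t - W j t) < \<epsilon>) \<and>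
        (\<forall>s\<in>D. (\<lambda>k. kcomb K (W k) s) \<longlonglongrightarrow> f s))"

definition formally_psd :: "(nat \<Rightarrow> nat \<Rightarrow> complex) \<Rightarrow> bool" where
  "formally_psd x \<longleftrightarrow>
     (\<forall>F v. finite F \<and> F \<subseteq> {1..} \<longrightarrow>
        cnonneg (\<Sum>m\<in>F. \<Sum>n\<in>F. cnj (v m) * x m n * v n))"

definition dir_term :: "(nat \<Rightarrow> complex) \<Rightarrow> complex \<Rightarrow> nat \<Rightarrow> complex" where
  "dir_term fh s n = fh n * of_nat n powr (- s)"

end

theory Submission
  imports Defs
begin

(* Membership of f in the reproducing kernel Hilbert space of K is equivalent to positive
   semi-definiteness of C K - f (x) conj f for some C >= 0: the approximants of f have bounded
   norms, which gives the kernel inequality by Cauchy-Schwarz; conversely the inequality bounds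
   the energy ||g - f||^2 - ||f||^2 from below on finite kernel combinations g, and a minimising
   sequence converges to f.

   For a Dirichlet series kernel, C kappa_a - f (x) conj f is itself the double Dirichlet series
   with matrix C a - fhat (x) conj fhat, so its quadratic forms are limits of quadratic forms of
   this matrix. Conversely, kernel combinations over equally spaced points sigma + i h j on a
   vertical line have coefficient vectors converging to any prescribed finitely supported vector,
   and dominated convergence recovers the quadratic forms of the matrix. *)

section \<open>Hermitian forms of positive semi-definite kernels\<close>

lemma cnonneg_iff_Re: "cnonneg z \<longleftrightarrow> z = complex_of_real (Re z) \<and> Re z \<ge> 0"
  unfolding cnonneg_def by (auto simp: complex_eq_iff)

lemma closed_cnonneg: "closed {z. cnonneg z}"
proof -
  have "{z. cnonneg z} = {z. Im z = 0} \<inter> {z. Re z \<ge> 0}"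
    unfolding cnonneg_def by auto
  then show ?thesis
    by (simp add: closed_Int closed_Collect_eq closed_Collect_le continuous_intros)
qed

lemma cnonneg_tendsto:
  assumes "X \<longlonglongrightarrow> L" "\<And>n. cnonneg (X n)"
  shows "cnonneg L"
  using Lim_in_closed_set[OF closed_cnonneg, of X sequentially L] assms by auto

lemma psd_kernelD:
  "psd_kernel D K \<Longrightarrow> finite F \<Longrightarrow> F \<subseteq> D \<Longrightarrow> cnonneg (\<Sum>t\<in>F. \<Sum>u\<in>F. c t * cnj (c u) * K u t)"
  unfolding psd_kernel_def by blast

lemma psd_kernel_hermitian:
  assumes "psd_kernel D K" "t \<in> D" "u \<in> D"
  shows "K u t = cnj (K t u)"
proof (cases "t = u")
  case True
  have "cnonneg (K t t)"
    using psd_kernelD[OF assms(1), of "{t}" "\<lambda>_. 1"] assms by simp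
  then show ?thesis unfolding True by (simp add: cnonneg_def complex_eq_iff)
next
  case False
  have "cnonneg (K t t)" "cnonneg (K u u)"
    using psd_kernelD[OF assms(1), of "{t}" "\<lambda>_. 1"] psd_kernelD[OF assms(1), of "{u}" "\<lambda>_. 1"] assms
    by simp_all
  moreover have "cnonneg (K t t + K u t + (K t u + K u u))"
    using psd_kernelD[OF assms(1), of "{t,u}" "\<lambda>_. 1"] assms False by simp
  moreover have "cnonneg (K t t + \<i> * K t u + (- \<i> * K u t + K u u))"
    using psd_kernelD[OF assms(1), of "{t,u}" "\<lambda>x. if x = t then 1 else \<i>"] assms False
    by (simp add: algebra_simps)
  ultimately show ?thesis
    by (simp add: cnonneg_def complex_eq_iff)
qed

text \<open>With \<open>w\<close>, \<open>v\<close> supported in \<open>S\<close>, \<open>kernel_form S K w v\<close> is the inner product of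
  \<open>\<Sum>\<^sub>t w t K(\<cdot>,t)\<close> and \<open>\<Sum>\<^sub>t v t K(\<cdot>,t)\<close> in the reproducing kernel Hilbert space.\<close>
definition kernel_form ::
    "complex set \<Rightarrow> (complex \<Rightarrow> complex \<Rightarrow> complex) \<Rightarrow> (complex \<Rightarrow> complex) \<Rightarrow> (complex \<Rightarrow> complex) \<Rightarrow> complex"
  where "kernel_form S K w v = (\<Sum>t\<in>S. \<Sum>u\<in>S. w t * cnj (v u) * K u t)"

lemma supp_c_subsetD: "supp_c w \<subseteq> S \<Longrightarrow> t \<notin> S \<Longrightarrow> w t = 0"
  unfolding supp_c_def by auto

lemma supp_c_add_scaled: "supp_c (\<lambda>t. w t + l * v t) \<subseteq> supp_c w \<union> supp_c v"
  unfolding supp_c_def by auto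

lemma supp_c_diff: "supp_c (\<lambda>t. w t - v t) \<subseteq> supp_c w \<union> supp_c v"
  unfolding supp_c_def by auto

lemma kernel_form_superset:
  assumes "finite S'" "S \<subseteq> S'" "supp_c w \<subseteq> S" "supp_c v \<subseteq> S"
  shows "kernel_form S' K w v = kernel_form S K w v"
proof -
  have "finite S" using assms finite_subset by blast
  have "kernel_form S' K w v = (\<Sum>t\<in>S. \<Sum>u\<in>S'. w t * cnj (v u) * K u t)"
    unfolding kernel_form_def
    by (rule sum.mono_neutral_right) (use assms supp_c_subsetD[OF assms(3)] in auto)
  also have "\<dots> = kernel_form S K w v"
    unfolding kernel_form_def
    by (rule sum.cong[OF refl], rule sum.mono_neutral_right)
      (use assms \<open>finite S\<close> supp_c_subsetD[OF assms(4)] in auto)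
  finally show ?thesis .
qed

lemma knormsq_eq_kernel_form:
  assumes "finite S" "supp_c w \<subseteq> S"
  shows "knormsq K w = Re (kernel_form S K w w)"
  using kernel_form_superset[OF assms(1,2) order_refl order_refl] assms(2)
  unfolding knormsq_def kernel_form_def by simp

lemma kernel_form_eq_kcomb:
  assumes "finite S" "supp_c w \<subseteq> S"
  shows "kernel_form S K w v = (\<Sum>u\<in>S. cnj (v u) * kcomb K w u)"
proof -
  have "kcomb K w u = (\<Sum>t\<in>S. w t * K u t)" for u
    unfolding kcomb_def
    by (rule sum.mono_neutral_left) (use assms finite_subset in \<open>auto simp: supp_c_def\<close>)
  then show ?thesis
    unfolding kernel_form_def by (subst sum.swap) (simp add: sum_distrib_left mult_ac)
qed

lemma kernel_form_linear_left:
  "kernel_form S K (\<lambda>t. \<alpha> * w t + \<beta> * v t) z = \<alpha> * kernel_form S K w z + \<beta> * kernel_form S K v z"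
  unfolding kernel_form_def by (simp add: algebra_simps sum.distrib sum_distrib_left)

lemma kernel_form_linear_right:
  "kernel_form S K z (\<lambda>t. \<alpha> * w t + \<beta> * v t) = cnj \<alpha> * kernel_form S K z w + cnj \<beta> * kernel_form S K z v"
  unfolding kernel_form_def by (simp add: algebra_simps sum.distrib sum_distrib_left)

lemma kernel_form_hermitian:
  assumes "psd_kernel D K" "S \<subseteq> D"
  shows "kernel_form S K v w = cnj (kernel_form S K w v)"
proof -
  have "cnj (K u t) = K t u" if "t \<in> S" "u \<in> S" for t u
    using psd_kernel_hermitian[OF assms(1), of u t] assms(2) that by (simp add: subset_iff)
  then have "cnj (kernel_form S K w v) = (\<Sum>t\<in>S. \<Sum>u\<in>S. cnj (w t) * v u * K t u)"
    unfolding kernel_form_def cnj_sum by (intro sum.cong refl) auto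
  also have "\<dots> = kernel_form S K v w"
    unfolding kernel_form_def by (subst sum.swap) (simp add: algebra_simps)
  finally show ?thesis by simp
qed

lemma kernel_form_cnonneg:
  "psd_kernel D K \<Longrightarrow> finite S \<Longrightarrow> S \<subseteq> D \<Longrightarrow> cnonneg (kernel_form S K w w)"
  unfolding kernel_form_def by (rule psd_kernelD)

lemma kernel_form_nonneg:
  "psd_kernel D K \<Longrightarrow> finite S \<Longrightarrow> S \<subseteq> D \<Longrightarrow> Re (kernel_form S K w w) \<ge> 0"
  using kernel_form_cnonneg unfolding cnonneg_def by blast

lemma kernel_form_real:
  "psd_kernel D K \<Longrightarrow> finite S \<Longrightarrow> S \<subseteq> D \<Longrightarrow>
    kernel_form S K w w = complex_of_real (Re (kernel_form S K w w))"
  using kernel_form_cnonneg unfolding cnonneg_iff_Re by blast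

lemma kernel_form_add_scaled:
  assumes "psd_kernel D K" "finite S" "S \<subseteq> D"
  shows "Re (kernel_form S K (\<lambda>t. w t + l * v t) (\<lambda>t. w t + l * v t)) =
     Re (kernel_form S K w w) + 2 * Re (cnj l * kernel_form S K w v) + (cmod l)\<^sup>2 * Re (kernel_form S K v v)"
proof -
  have expand: "kernel_form S K (\<lambda>t. w t + l * v t) (\<lambda>t. w t + l * v t) =
      kernel_form S K w w + cnj l * kernel_form S K w v + l * kernel_form S K v w
      + l * cnj l * kernel_form S K v v"
    using kernel_form_linear_left[of S K 1 w l v] kernel_form_linear_right[of S K _ 1 w l v]
    by (simp add: algebra_simps)
  have herm: "kernel_form S K v w = cnj (kernel_form S K w v)"
    using kernel_form_hermitian assms by blast
  have real: "kernel_form S K v v = complex_of_real (Re (kernel_form S K v v))"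
    using kernel_form_real assms by blast
  show ?thesis
    unfolding expand herm complex_norm_square[symmetric]
    by (subst real) (simp add: algebra_simps)
qed

lemma kernel_form_Cauchy_Schwarz:
  assumes "psd_kernel D K" "finite S" "S \<subseteq> D"
  shows "(cmod (kernel_form S K w v))\<^sup>2 \<le> Re (kernel_form S K w w) * Re (kernel_form S K v v)"
proof -
  let ?b = "kernel_form S K w v" and ?A = "Re (kernel_form S K w w)" and ?B = "Re (kernel_form S K v v)"
  have A: "?A \<ge> 0" and B: "?B \<ge> 0"
    using kernel_form_nonneg[OF assms] by auto
  have quadratic: "0 \<le> ?A - 2 * e * (cmod ?b)\<^sup>2 + e\<^sup>2 * (cmod ?b)\<^sup>2 * ?B" for e :: real
  proof -
    have "0 \<le> Re (kernel_form S K (\<lambda>t. w t + (- of_real e * ?b) * v t) (\<lambda>t. w t + (- of_real e * ?b) * v t))"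
      by (rule kernel_form_nonneg[OF assms])
    also have "\<dots> = ?A + 2 * Re (cnj (- of_real e * ?b) * ?b) + (cmod (- of_real e * ?b))\<^sup>2 * ?B"
      by (rule kernel_form_add_scaled[OF assms])
    also have "cnj (- of_real e * ?b) * ?b = - of_real (e * (cmod ?b)\<^sup>2)"
      using complex_norm_square[of ?b] by (simp add: mult.commute)
    also have "(cmod (- of_real e * ?b))\<^sup>2 = e\<^sup>2 * (cmod ?b)\<^sup>2"
      by (simp add: norm_mult power_mult_distrib)
    finally show ?thesis by simp
  qed
  consider "?b = 0" | "?b \<noteq> 0" "?B = 0" | "?B > 0"
    using B by fastforce
  then show ?thesis
  proof cases
    case 1
    then show ?thesis using A B by simp
  next
    case 2
    then have "0 \<le> ?A - 2 * ((?A + 1) / (cmod ?b)\<^sup>2) * (cmod ?b)\<^sup>2"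
      using quadratic[of "(?A + 1) / (cmod ?b)\<^sup>2"] by simp
    with 2 A show ?thesis by simp
  next
    case 3
    have "0 \<le> ?A - 2 * (1 / ?B) * (cmod ?b)\<^sup>2 + (1 / ?B)\<^sup>2 * (cmod ?b)\<^sup>2 * ?B"
      by (rule quadratic)
    also have "\<dots> = ?A - (cmod ?b)\<^sup>2 / ?B"
      using 3 by (simp add: field_simps power2_eq_square)
    finally show ?thesis using 3 by (simp add: field_simps)
  qed
qed

lemma kernel_form_add_le:
  assumes "psd_kernel D K" "finite S" "S \<subseteq> D"
  shows "Re (kernel_form S K (\<lambda>t. w t + v t) (\<lambda>t. w t + v t))
    \<le> 2 * Re (kernel_form S K w w) + 2 * Re (kernel_form S K v v)"
  using kernel_form_add_scaled[OF assms, of w 1 v] kernel_form_add_scaled[OF assms, of w "-1" v]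
    kernel_form_nonneg[OF assms, of "\<lambda>t. w t + (-1) * v t"]
  by simp


section \<open>Membership in the reproducing kernel Hilbert space\<close>

definition majorant_kernel ::
    "real \<Rightarrow> (complex \<Rightarrow> complex \<Rightarrow> complex) \<Rightarrow> (complex \<Rightarrow> complex) \<Rightarrow> complex \<Rightarrow> complex \<Rightarrow> complex"
  where "majorant_kernel C K f s u = of_real C * K s u - f s * cnj (f u)"

text \<open>Once \<open>f\<close> is known to lie in the space, \<open>kernel_pairing S f w\<close> is the inner product of
  \<open>\<Sum>\<^sub>t w t K(\<cdot>,t)\<close> with \<open>f\<close>.\<close>
definition kernel_pairing :: "complex set \<Rightarrow> (complex \<Rightarrow> complex) \<Rightarrow> (complex \<Rightarrow> complex) \<Rightarrow> complex"
  where "kernel_pairing S f w = (\<Sum>t\<in>S. w t * cnj (f t))"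

definition fin_coeffs :: "complex set \<Rightarrow> (complex \<Rightarrow> complex) set"
  where "fin_coeffs D = {w. finite (supp_c w) \<and> supp_c w \<subseteq> D}"

lemma kernel_pairing_superset:
  assumes "finite S'" "S \<subseteq> S'" "supp_c w \<subseteq> S"
  shows "kernel_pairing S' f w = kernel_pairing S f w"
  unfolding kernel_pairing_def
  by (rule sum.mono_neutral_right) (use assms supp_c_subsetD[OF assms(3)] in auto)

lemma kernel_pairing_add_scaled:
  "kernel_pairing S f (\<lambda>t. w t + l * v t) = kernel_pairing S f w + l * kernel_pairing S f v"
  unfolding kernel_pairing_def by (simp add: algebra_simps sum.distrib sum_distrib_left)

lemma fin_coeffs_add_scaled:
  "w \<in> fin_coeffs D \<Longrightarrow> v \<in> fin_coeffs D \<Longrightarrow> (\<lambda>t. w t + l * v t) \<in> fin_coeffs D"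
  using supp_c_add_scaled[of w l v] finite_subset unfolding fin_coeffs_def by blast

lemma psd_majorant_kernel_iff:
  assumes "psd_kernel D K"
  shows "psd_kernel D (majorant_kernel C K f) \<longleftrightarrow>
    (\<forall>F c. finite F \<and> F \<subseteq> D \<longrightarrow> (cmod (kernel_pairing F f c))\<^sup>2 \<le> C * Re (kernel_form F K c c))"
proof -
  have "(\<Sum>t\<in>F. \<Sum>u\<in>F. c t * cnj (c u) * majorant_kernel C K f u t)
      = of_real C * kernel_form F K c c - kernel_pairing F f c * cnj (kernel_pairing F f c)"
    for F c
    unfolding majorant_kernel_def kernel_form_def kernel_pairing_def cnj_sum sum_product
    by (simp add: sum_subtractf sum_distrib_left algebra_simps)
  also have "\<dots> F c = of_real (C * Re (kernel_form F K c c) - (cmod (kernel_pairing F f c))\<^sup>2)"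
    if "finite F" "F \<subseteq> D" for F c
    using kernel_form_real[OF assms that, of c]
    by (metis complex_norm_square of_real_diff of_real_mult)
  finally show ?thesis
    unfolding psd_kernel_def cnonneg_def by auto
qed

definition point_mass :: "complex \<Rightarrow> complex \<Rightarrow> complex"
  where "point_mass s t = (if t = s then 1 else 0)"

lemma supp_c_point_mass: "supp_c (point_mass s) = {s}"
  unfolding point_mass_def supp_c_def by auto

lemma kcomb_point_mass: "kcomb K (point_mass s) u = K u s"
  unfolding kcomb_def supp_c_point_mass by (simp add: point_mass_def)

lemma kernel_form_point_mass:
  assumes "finite S" "supp_c w \<subseteq> S" "s \<in> S"
  shows "kernel_form S K w (point_mass s) = kcomb K w s"
  unfolding kernel_form_eq_kcomb[OF assms(1,2)] point_mass_def
  using assms by (simp add: if_distrib[of cnj] mult_delta_left sum.delta' cong: if_cong)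

lemma kernel_pairing_point_mass:
  "finite S \<Longrightarrow> s \<in> S \<Longrightarrow> kernel_pairing S f (point_mass s) = cnj (f s)"
  unfolding kernel_pairing_def point_mass_def by (simp add: mult_delta_left sum.delta' cong: if_cong)

locale kernel_majorant =
  fixes D :: "complex set" and K :: "complex \<Rightarrow> complex \<Rightarrow> complex"
    and f :: "complex \<Rightarrow> complex" and C :: real
  assumes psd: "psd_kernel D K"
    and majorant_psd: "psd_kernel D (majorant_kernel C K f)"
    and C_nonneg: "C \<ge> 0"
begin

text \<open>\<open>energy w = \<parallel>g\<^sub>w - f\<parallel>\<^sup>2 - \<parallel>f\<parallel>\<^sup>2\<close> for \<open>g\<^sub>w = \<Sum>\<^sub>t w t K(\<cdot>,t)\<close>, expressed without reference to
  the (not yet available) norm of \<open>f\<close>; minimising it produces the approximating sequence.\<close>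
definition energy :: "(complex \<Rightarrow> complex) \<Rightarrow> real"
  where "energy w = knormsq K w - 2 * Re (kernel_pairing (supp_c w) f w)"

definition min_energy :: real
  where "min_energy = Inf (energy ` fin_coeffs D)"

lemma energy_eq:
  assumes "finite S" "supp_c w \<subseteq> S"
  shows "energy w = Re (kernel_form S K w w) - 2 * Re (kernel_pairing S f w)"
  unfolding energy_def knormsq_eq_kernel_form[OF assms]
  using kernel_pairing_superset[OF assms(1) assms(2) order_refl] by simp

lemma energy_lower_bound:
  assumes "w \<in> fin_coeffs D"
  shows "- C \<le> energy w"
proof -
  define S where "S = supp_c w"
  have S: "finite S" "S \<subseteq> D" using assms unfolding S_def fin_coeffs_def by auto
  define N where "N = Re (kernel_form S K w w)"
  define p where "p = cmod (kernel_pairing S f w)"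
  have "N \<ge> 0" using kernel_form_nonneg[OF psd S] N_def by simp
  have "p\<^sup>2 \<le> C * N"
    using majorant_psd S unfolding psd_majorant_kernel_iff[OF psd] N_def p_def by blast
  also have "\<dots> \<le> ((N + C) / 2)\<^sup>2"
    using sum_squares_ge_zero[of "N - C" 0] by (simp add: power2_eq_square field_simps)
  finally have "p \<le> (N + C) / 2"
    by (rule power2_le_imp_le) (use \<open>N \<ge> 0\<close> C_nonneg in simp)
  moreover have "Re (kernel_pairing S f w) \<le> p"
    unfolding p_def by (rule complex_Re_le_cmod)
  ultimately show ?thesis
    using energy_eq[of S w] S unfolding N_def S_def by simp
qed

lemma min_energy_le: "w \<in> fin_coeffs D \<Longrightarrow> min_energy \<le> energy w"
  unfolding min_energy_def
  by (rule cInf_lower) (use energy_lower_bound in \<open>auto intro: bdd_belowI[of _ "- C"]\<close>)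

lemma minimizing_sequence:
  obtains W where "\<And>k. W k \<in> fin_coeffs D" "(\<lambda>k. energy (W k)) \<longlonglongrightarrow> min_energy"
proof -
  have "(\<lambda>_. 0) \<in> fin_coeffs D" unfolding fin_coeffs_def supp_c_def by simp
  then have "\<exists>w\<in>fin_coeffs D. energy w < min_energy + 1 / real (Suc k)" for k
    using cInf_less_iff[of "energy ` fin_coeffs D" "min_energy + 1 / real (Suc k)"]
      energy_lower_bound
    unfolding min_energy_def[symmetric] by (force intro: bdd_belowI[of _ "- C"])
  then obtain W where W: "\<And>k. W k \<in> fin_coeffs D"
    and upper: "\<And>k. energy (W k) < min_energy + 1 / real (Suc k)"
    by metis
  have "(\<lambda>k. energy (W k)) \<longlonglongrightarrow> min_energy"
  proof (rule tendsto_sandwich[of "\<lambda>_. min_energy" _ _ "\<lambda>k. min_energy + 1 / real (Suc k)"])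
    show "(\<lambda>k. min_energy + 1 / real (Suc k)) \<longlonglongrightarrow> min_energy"
      using tendsto_add[OF tendsto_const LIMSEQ_Suc[OF lim_const_over_n[of 1]]] by simp
    show "eventually (\<lambda>k. energy (W k) \<le> min_energy + 1 / real (Suc k)) sequentially"
      using upper by (intro always_eventually allI less_imp_le)
    show "eventually (\<lambda>k. min_energy \<le> energy (W k)) sequentially"
      by (intro always_eventually allI min_energy_le W)
  qed simp
  with W that show ?thesis by blast
qed

lemma energy_parallelogram:
  assumes "v \<in> fin_coeffs D" "w \<in> fin_coeffs D"
  shows "knormsq K (\<lambda>t. v t - w t) \<le> 2 * (energy v - min_energy) + 2 * (energy w - min_energy)"
proof -
  define S where "S = supp_c v \<union> supp_c w"
  have S: "finite S" "S \<subseteq> D" using assms unfolding S_def fin_coeffs_def by auto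
  define d where "d = (\<lambda>t. v t - w t)"
  define m where "m = (\<lambda>t. v t + (- 1/2) * d t)"
  have supp: "supp_c v \<subseteq> S" "supp_c w \<subseteq> S" "supp_c d \<subseteq> S" "supp_c m \<subseteq> S"
    using supp_c_diff[of v w] supp_c_add_scaled[of v "-1/2" d] unfolding S_def d_def m_def by auto
  have "m \<in> fin_coeffs D"
    using supp S finite_subset unfolding fin_coeffs_def by blast
  have w_eq: "w = (\<lambda>t. v t + (- 1) * d t)" unfolding d_def by auto
  have "kernel_pairing S f d = kernel_pairing S f v - kernel_pairing S f w"
    unfolding d_def kernel_pairing_def by (simp add: algebra_simps sum_subtractf)
  then have pairing_m:
    "kernel_pairing S f m = kernel_pairing S f v + (-1/2) * (kernel_pairing S f v - kernel_pairing S f w)"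
    unfolding m_def kernel_pairing_add_scaled by simp
  have form_m: "Re (kernel_form S K m m) = Re (kernel_form S K v v)
      + 2 * Re (cnj (-1/2) * kernel_form S K v d) + (cmod (-1/2 :: complex))\<^sup>2 * Re (kernel_form S K d d)"
    unfolding m_def by (rule kernel_form_add_scaled[OF psd S])
  have form_w: "Re (kernel_form S K w w) = Re (kernel_form S K v v)
      + 2 * Re (cnj (-1) * kernel_form S K v d) + (cmod (-1 :: complex))\<^sup>2 * Re (kernel_form S K d d)"
    by (subst (1 2) w_eq, rule kernel_form_add_scaled[OF psd S])
  have "knormsq K d = 2 * energy v + 2 * energy w - 4 * energy m"
    unfolding energy_eq[OF S(1) supp(1)] energy_eq[OF S(1) supp(2)] energy_eq[OF S(1) supp(4)]
      knormsq_eq_kernel_form[OF S(1) supp(3)] pairing_m form_m form_w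
    by (simp add: algebra_simps power2_eq_square)
  with min_energy_le[OF \<open>m \<in> fin_coeffs D\<close>] show ?thesis
    unfolding d_def by simp
qed

lemma energy_add_point_mass:
  assumes "w \<in> fin_coeffs D" "s \<in> D"
  shows "energy (\<lambda>t. w t + l * point_mass s t)
    = energy w + 2 * Re (cnj l * (kcomb K w s - f s)) + (cmod l)\<^sup>2 * Re (K s s)"
proof -
  define S where "S = supp_c w \<union> {s}"
  have S: "finite S" "S \<subseteq> D" "s \<in> S"
    using assms unfolding S_def fin_coeffs_def by auto
  have supp: "supp_c w \<subseteq> S" "supp_c (point_mass s) \<subseteq> S" "supp_c (\<lambda>t. w t + l * point_mass s t) \<subseteq> S"
    using supp_c_add_scaled[of w l "point_mass s"] unfolding S_def supp_c_point_mass by auto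
  have "Re (l * cnj (f s)) = Re (cnj l * f s)"
    by simp
  then show ?thesis
    unfolding energy_eq[OF S(1) supp(3)] energy_eq[OF S(1) supp(1)]
    unfolding kernel_form_add_scaled[OF psd S(1,2)] kernel_pairing_add_scaled
      kernel_form_point_mass[OF S(1) supp(1) S(3)] kernel_form_point_mass[OF S(1) supp(2) S(3)]
      kcomb_point_mass kernel_pairing_point_mass[OF S(1) S(3)]
    by (simp add: algebra_simps)
qed

text \<open>Moving \<open>w\<close> in the direction of the point evaluation at \<open>s\<close> decreases the energy by roughly
  \<open>|g\<^sub>w(s) - f(s)|\<^sup>2\<close>, which therefore is controlled by the distance of \<open>energy w\<close> to its infimum.\<close>
lemma energy_pointwise:
  assumes "w \<in> fin_coeffs D" "s \<in> D"
  shows "(cmod (kcomb K w s - f s))\<^sup>2 \<le> (energy w - min_energy) * (Re (K s s) + 1)"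
proof -
  define q where "q = Re (K s s)"
  have "q \<ge> 0"
    using psd_kernelD[OF psd, of "{s}" "\<lambda>_. 1"] assms(2) unfolding q_def cnonneg_def by simp
  define d where "d = kcomb K w s - f s"
  define \<epsilon> where "\<epsilon> = 1 / (q + 1)"
  have "\<epsilon> > 0" "\<epsilon> * q \<le> 1"
    unfolding \<epsilon>_def using \<open>q \<ge> 0\<close> by (auto simp: field_simps)
  define l where "l = - of_real \<epsilon> * d"
  have "point_mass s \<in> fin_coeffs D"
    using assms(2) by (simp add: fin_coeffs_def supp_c_point_mass)
  then have "min_energy \<le> energy (\<lambda>t. w t + l * point_mass s t)"
    by (intro min_energy_le fin_coeffs_add_scaled assms(1))
  also have "energy (\<lambda>t. w t + l * point_mass s t) = energy w + 2 * Re (cnj l * d) + (cmod l)\<^sup>2 * q"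
    unfolding energy_add_point_mass[OF assms] d_def q_def ..
  also have "cnj l * d = - of_real (\<epsilon> * (cmod d)\<^sup>2)"
    unfolding l_def using complex_norm_square[of d] by (simp add: mult.commute)
  also have "(cmod l)\<^sup>2 = \<epsilon>\<^sup>2 * (cmod d)\<^sup>2"
    unfolding l_def using \<open>\<epsilon> > 0\<close> by (simp add: norm_mult power_mult_distrib)
  finally have "\<epsilon> * (cmod d)\<^sup>2 * (2 - \<epsilon> * q) \<le> energy w - min_energy"
    by (simp add: algebra_simps power2_eq_square)
  moreover have "\<epsilon> * (cmod d)\<^sup>2 * 1 \<le> \<epsilon> * (cmod d)\<^sup>2 * (2 - \<epsilon> * q)"
    using \<open>\<epsilon> * q \<le> 1\<close> \<open>\<epsilon> > 0\<close> by (intro mult_left_mono) auto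
  ultimately have "\<epsilon> * (cmod d)\<^sup>2 \<le> energy w - min_energy"
    by simp
  then show ?thesis
    unfolding \<epsilon>_def d_def q_def using \<open>q \<ge> 0\<close> by (simp add: field_simps q_def)
qed

lemma in_rkhs: "in_rkhs D K f"
proof -
  obtain W where W: "\<And>k. W k \<in> fin_coeffs D" and lim: "(\<lambda>k. energy (W k)) \<longlonglongrightarrow> min_energy"
    using minimizing_sequence by blast
  define e where "e k = energy (W k) - min_energy" for k
  have e: "e \<longlonglongrightarrow> 0"
    unfolding e_def using lim by (rule LIM_zero)
  have cauchy: "\<forall>\<epsilon>>0. \<exists>N. \<forall>i\<ge>N. \<forall>j\<ge>N. knormsq K (\<lambda>t. W i t - W j t) < \<epsilon>"
  proof (intro allI impI)
    fix \<epsilon> :: real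
    assume "\<epsilon> > 0"
    then obtain N where N: "\<forall>k\<ge>N. norm (e k - 0) < \<epsilon> / 4"
      using LIMSEQ_D[OF e, of "\<epsilon> / 4"] by auto
    have "knormsq K (\<lambda>t. W i t - W j t) < \<epsilon>" if "i \<ge> N" "j \<ge> N" for i j
    proof -
      have "e i < \<epsilon> / 4" "e j < \<epsilon> / 4"
        using N that by (auto simp: abs_less_iff)
      then show ?thesis
        using energy_parallelogram[OF W W, of i j] unfolding e_def by (simp add: field_simps)
    qed
    then show "\<exists>N. \<forall>i\<ge>N. \<forall>j\<ge>N. knormsq K (\<lambda>t. W i t - W j t) < \<epsilon>"
      by blast
  qed
  have conv: "\<forall>s\<in>D. (\<lambda>k. kcomb K (W k) s) \<longlonglongrightarrow> f s"
  proof
    fix s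
    assume "s \<in> D"
    have lim0: "(\<lambda>k. sqrt (e k * (Re (K s s) + 1))) \<longlonglongrightarrow> 0"
      using tendsto_real_sqrt[OF tendsto_mult_left_zero[OF e]] by simp
    have bound: "\<forall>k. norm (kcomb K (W k) s - f s) \<le> sqrt (e k * (Re (K s s) + 1))"
      using energy_pointwise[OF W \<open>s \<in> D\<close>] unfolding e_def by (intro allI real_le_rsqrt) simp
    have "(\<lambda>k. kcomb K (W k) s - f s) \<longlonglongrightarrow> 0"
      by (rule Lim_null_comparison[OF always_eventually[OF bound] lim0])
    then show "(\<lambda>k. kcomb K (W k) s) \<longlonglongrightarrow> f s"
      by (rule LIM_zero_cancel)
  qed
  have supp: "\<forall>k. finite (supp_c (W k)) \<and> supp_c (W k) \<subseteq> D"
    using W unfolding fin_coeffs_def by blast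
  show ?thesis
    unfolding in_rkhs_def by (intro exI[of _ W] conjI supp cauchy conv)
qed

end

lemma knormsq_nonneg: "psd_kernel D K \<Longrightarrow> w \<in> fin_coeffs D \<Longrightarrow> knormsq K w \<ge> 0"
  using knormsq_eq_kernel_form[of "supp_c w" w K] kernel_form_nonneg[of D K "supp_c w" w]
  unfolding fin_coeffs_def by auto

lemma knormsq_bounded_if_Cauchy:
  fixes W :: "nat \<Rightarrow> complex \<Rightarrow> complex"
  assumes psd: "psd_kernel D K" and W: "\<And>k. W k \<in> fin_coeffs D"
    and cauchy: "\<forall>\<epsilon>>0. \<exists>N. \<forall>i\<ge>N. \<forall>j\<ge>N. knormsq K (\<lambda>t. W i t - W j t) < \<epsilon>"
  obtains B where "\<And>k. knormsq K (W k) \<le> B"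
proof -
  obtain N where N: "\<forall>i\<ge>N. \<forall>j\<ge>N. knormsq K (\<lambda>t. W i t - W j t) < 1"
    using cauchy zero_less_one by blast
  have tail: "knormsq K (W k) \<le> 2 * knormsq K (W N) + 2" if "k \<ge> N" for k
  proof -
    define S where "S = supp_c (W k) \<union> supp_c (W N)"
    have S: "finite S" "S \<subseteq> D" using W unfolding S_def fin_coeffs_def by auto
    have supp: "supp_c (W k) \<subseteq> S" "supp_c (W N) \<subseteq> S" "supp_c (\<lambda>t. W k t - W N t) \<subseteq> S"
      using supp_c_diff unfolding S_def by auto
    have "knormsq K (W k) = Re (kernel_form S K (\<lambda>t. W N t + (W k t - W N t)) (\<lambda>t. W N t + (W k t - W N t)))"
      using knormsq_eq_kernel_form[OF S(1) supp(1)] by simp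
    also have "\<dots> \<le> 2 * knormsq K (W N) + 2 * knormsq K (\<lambda>t. W k t - W N t)"
      unfolding knormsq_eq_kernel_form[OF S(1) supp(2)] knormsq_eq_kernel_form[OF S(1) supp(3)]
      by (rule kernel_form_add_le[OF psd S])
    also have "knormsq K (\<lambda>t. W k t - W N t) < 1"
      using N that by blast
    finally show ?thesis by simp
  qed
  have "knormsq K (W k) \<le> 2 * knormsq K (W N) + 2 + (\<Sum>i<N. knormsq K (W i))" for k
  proof (cases "k < N")
    case True
    then have "knormsq K (W k) \<le> (\<Sum>i<N. knormsq K (W i))"
      using knormsq_nonneg[OF psd W] by (intro member_le_sum) auto
    then show ?thesis using knormsq_nonneg[OF psd W, of N] by linarith
  next
    case False
    then show ?thesis
      using tail[of k] knormsq_nonneg[OF psd W] sum_nonneg[of "{..<N}" "\<lambda>i. knormsq K (W i)"] by force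
  qed
  then show ?thesis using that by blast
qed

lemma kernel_pairing_kcomb_Cauchy_Schwarz:
  assumes psd: "psd_kernel D K" and "w \<in> fin_coeffs D" "finite F" "F \<subseteq> D"
  shows "(cmod (kernel_pairing F (kcomb K w) c))\<^sup>2 \<le> knormsq K w * Re (kernel_form F K c c)"
proof -
  define c' where "c' = (\<lambda>t. if t \<in> F then c t else 0)"
  define S where "S = supp_c w \<union> F"
  have S: "finite S" "S \<subseteq> D" using assms unfolding S_def fin_coeffs_def by auto
  have supp: "supp_c w \<subseteq> S" "supp_c c' \<subseteq> F" and "F \<subseteq> S"
    unfolding S_def c'_def supp_c_def by auto
  have "(\<Sum>u\<in>S. cnj (c' u) * kcomb K w u) = (\<Sum>u\<in>F. cnj (c u) * kcomb K w u)"
    by (rule sum.mono_neutral_cong_right) (use S(1) in \<open>auto simp: S_def c'_def\<close>)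
  then have "kernel_form S K w c' = cnj (kernel_pairing F (kcomb K w) c)"
    unfolding kernel_form_eq_kcomb[OF S(1) supp(1)] kernel_pairing_def cnj_sum by simp
  then have "(cmod (kernel_pairing F (kcomb K w) c))\<^sup>2 \<le> Re (kernel_form S K w w) * Re (kernel_form S K c' c')"
    using kernel_form_Cauchy_Schwarz[OF psd S, of w c'] by simp
  also have "kernel_form S K c' c' = kernel_form F K c c"
    unfolding kernel_form_superset[OF S(1) \<open>F \<subseteq> S\<close> supp(2) supp(2)]
    unfolding kernel_form_def c'_def by (intro sum.cong) auto
  finally show ?thesis
    using knormsq_eq_kernel_form[OF S(1) supp(1)] by simp
qed

lemma psd_majorant_if_in_rkhs:
  assumes psd: "psd_kernel D K" and "in_rkhs D K f"
  shows "\<exists>C\<ge>0. psd_kernel D (majorant_kernel C K f)"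
proof -
  obtain W where W: "\<And>k. W k \<in> fin_coeffs D"
    and cauchy: "\<forall>\<epsilon>>0. \<exists>N. \<forall>i\<ge>N. \<forall>j\<ge>N. knormsq K (\<lambda>t. W i t - W j t) < \<epsilon>"
    and conv: "\<forall>s\<in>D. (\<lambda>k. kcomb K (W k) s) \<longlonglongrightarrow> f s"
    using assms(2) unfolding in_rkhs_def fin_coeffs_def by blast
  obtain B where B: "\<And>k. knormsq K (W k) \<le> B"
    using knormsq_bounded_if_Cauchy[OF psd W cauchy] by blast
  have "B \<ge> 0"
    using B[of 0] knormsq_nonneg[OF psd W, of 0] by linarith
  have "psd_kernel D (majorant_kernel B K f)"
    unfolding psd_majorant_kernel_iff[OF psd]
  proof (intro allI impI)
    fix F :: "complex set" and c :: "complex \<Rightarrow> complex"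
    assume F: "finite F \<and> F \<subseteq> D"
    have bound: "(cmod (kernel_pairing F (kcomb K (W k)) c))\<^sup>2 \<le> B * Re (kernel_form F K c c)" for k
      using kernel_pairing_kcomb_Cauchy_Schwarz[OF psd W[of k], of F c] F
        mult_right_mono[OF B[of k] kernel_form_nonneg[OF psd, of F c]] by (meson order_trans)
    have "(\<lambda>k. kernel_pairing F (kcomb K (W k)) c) \<longlonglongrightarrow> kernel_pairing F f c"
      unfolding kernel_pairing_def using conv F by (intro tendsto_intros) auto
    then have "(\<lambda>k. (cmod (kernel_pairing F (kcomb K (W k)) c))\<^sup>2) \<longlonglongrightarrow> (cmod (kernel_pairing F f c))\<^sup>2"
      by (intro tendsto_intros)
    then show "(cmod (kernel_pairing F f c))\<^sup>2 \<le> B * Re (kernel_form F K c c)"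
      by (rule LIMSEQ_le_const2) (use bound in auto)
  qed
  with \<open>B \<ge> 0\<close> show ?thesis by blast
qed

lemma in_rkhs_iff_psd_majorant:
  assumes "psd_kernel D K"
  shows "in_rkhs D K f \<longleftrightarrow> (\<exists>C\<ge>0. psd_kernel D (majorant_kernel C K f))"
  using psd_majorant_if_in_rkhs[OF assms] kernel_majorant.in_rkhs[OF kernel_majorant.intro[OF assms]]
  by blast

section \<open>Dirichlet series kernels\<close>

lemma norm_nat_powr: "n \<ge> 1 \<Longrightarrow> norm (of_nat n powr (- s) :: complex) = real n powr (- Re s)"
  using norm_powr_real_powr[of "of_nat n" "-s"] by simp

lemma cnj_nat_powr: "cnj (of_nat n powr (- s) :: complex) = of_nat n powr (- cnj s)"
  by (subst cnj_powr) auto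

lemma suminf1_tendsto:
  assumes "summable1 g"
  shows "(\<lambda>N. \<Sum>n\<in>{1..N}. g n) \<longlonglongrightarrow> suminf1 g"
proof -
  have "(\<Sum>n\<le>N. if n = 0 then 0 else g n) = (\<Sum>n\<in>{1..N}. g n)" for N
    by (rule sum.mono_neutral_cong_right) auto
  then show ?thesis
    using summable_LIMSEQ'[OF assms[unfolded summable1_def]] unfolding suminf1_def by simp
qed

lemma dkernel_tendsto:
  assumes "dirichlet_series_kernel \<rho> a" "s \<in> halfplane \<rho>" "u \<in> halfplane \<rho>"
  shows "(rect_sum (dk_term a s u) \<longlongrightarrow> dkernel a s u) (sequentially \<times>\<^sub>F sequentially)"
proof -
  have "cnj u \<in> halfplane \<rho>" using assms(3) unfolding halfplane_def by simp
  then have "regularly_convergent (dk_term a s (cnj (cnj u)))"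
    using assms unfolding dirichlet_series_kernel_def by blast
  then obtain L where L: "(rect_sum (dk_term a s u) \<longlongrightarrow> L) (sequentially \<times>\<^sub>F sequentially)"
    unfolding regularly_convergent_def by auto
  moreover have "dkernel a s u = L"
    unfolding dkernel_def by (intro tendsto_Lim L) (simp add: prod_filter_eq_bot)
  ultimately show ?thesis by simp
qed

lemma tendsto_diagonal:
  assumes "(g \<longlongrightarrow> L) (sequentially \<times>\<^sub>F sequentially)"
  shows "(\<lambda>N. g (N, N)) \<longlonglongrightarrow> L"
  using filterlim_compose[OF assms filterlim_Pair[OF filterlim_ident filterlim_ident]] by simp

definition majorant_matrix ::
    "real \<Rightarrow> (nat \<Rightarrow> nat \<Rightarrow> complex) \<Rightarrow> (nat \<Rightarrow> complex) \<Rightarrow> nat \<Rightarrow> nat \<Rightarrow> complex"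
  where "majorant_matrix C a fh m n = of_real C * a m n - fh m * cnj (fh n)"

lemma rect_sum_majorant_matrix:
  "rect_sum (dk_term (majorant_matrix C a fh) s u) (M, N) =
     of_real C * rect_sum (dk_term a s u) (M, N)
     - (\<Sum>m\<in>{1..M}. dir_term fh s m) * cnj (\<Sum>n\<in>{1..N}. dir_term fh u n)"
proof -
  have "dk_term (majorant_matrix C a fh) s u m n
      = of_real C * dk_term a s u m n - dir_term fh s m * cnj (dir_term fh u n)" for m n
    unfolding dk_term_def majorant_matrix_def dir_term_def by (simp add: cnj_nat_powr algebra_simps)
  then show ?thesis
    unfolding rect_sum_def cnj_sum sum_product by (simp add: sum_subtractf sum_distrib_left)
qed

lemma rect_sum_majorant_matrix_tendsto:
  assumes "dirichlet_series_kernel \<rho> a" "s \<in> halfplane \<rho>" "u \<in> halfplane \<rho>"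
    and "summable1 (dir_term fh s)" "summable1 (dir_term fh u)"
  shows "(rect_sum (dk_term (majorant_matrix C a fh) s u) \<longlongrightarrow>
           majorant_kernel C (dkernel a) (\<lambda>s. suminf1 (dir_term fh s)) s u)
         (sequentially \<times>\<^sub>F sequentially)"
proof -
  have "((\<lambda>p. of_real C * rect_sum (dk_term a s u) p
            - (\<Sum>m\<in>{1..fst p}. dir_term fh s m) * cnj (\<Sum>n\<in>{1..snd p}. dir_term fh u n))
        \<longlongrightarrow> majorant_kernel C (dkernel a) (\<lambda>s. suminf1 (dir_term fh s)) s u)
        (sequentially \<times>\<^sub>F sequentially)"
    unfolding majorant_kernel_def
    by (intro tendsto_intros dkernel_tendsto[OF assms(1-3)]
        filterlim_compose[OF suminf1_tendsto[OF assms(4)] filterlim_fst]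
        filterlim_compose[OF suminf1_tendsto[OF assms(5)] filterlim_snd])
  moreover have "rect_sum (dk_term (majorant_matrix C a fh) s u) = (\<lambda>p. of_real C * rect_sum (dk_term a s u) p
      - (\<Sum>m\<in>{1..fst p}. dir_term fh s m) * cnj (\<Sum>n\<in>{1..snd p}. dir_term fh u n))"
    by (intro ext) (metis prod.collapse rect_sum_majorant_matrix)
  ultimately show ?thesis
    by simp
qed

text \<open>\<open>\<Sum>\<^sub>t c t \<kappa>\<^sub>a(\<cdot>,t)\<close> is the Dirichlet series with coefficients \<open>\<Sum>\<^sub>n a m n * comb_vector T c n\<close>.\<close>
definition comb_vector :: "complex set \<Rightarrow> (complex \<Rightarrow> complex) \<Rightarrow> nat \<Rightarrow> complex"
  where "comb_vector T c n = (\<Sum>t\<in>T. c t * of_nat n powr (- cnj t))"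

lemma kernel_form_rect_sum:
  "(\<Sum>t\<in>T. \<Sum>u\<in>T. c t * cnj (c u) * rect_sum (dk_term X u t) (N, N))
   = (\<Sum>m\<in>{1..N}. \<Sum>n\<in>{1..N}. cnj (comb_vector T c m) * X m n * comb_vector T c n)"
proof -
  have "cnj (comb_vector T c m) * X m n * comb_vector T c n
      = (\<Sum>t\<in>T. \<Sum>u\<in>T. c t * cnj (c u) * dk_term X u t m n)" for m n
    unfolding comb_vector_def dk_term_def cnj_sum sum_distrib_left sum_distrib_right
    by (intro sum.cong refl) (simp add: cnj_nat_powr mult_ac)
  then have "(\<Sum>m\<in>{1..N}. \<Sum>n\<in>{1..N}. cnj (comb_vector T c m) * X m n * comb_vector T c n)
      = (\<Sum>t\<in>T. \<Sum>u\<in>T. \<Sum>m\<in>{1..N}. \<Sum>n\<in>{1..N}. c t * cnj (c u) * dk_term X u t m n)"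
    by (simp only: sum.swap[of _ "{1..N}" T])
  then show ?thesis
    unfolding rect_sum_def by (simp add: sum_distrib_left)
qed

lemma quadratic_form_tendsto:
  assumes "dirichlet_series_kernel \<rho> a" "\<forall>s\<in>halfplane \<rho>. summable1 (dir_term fh s)"
    and "T \<subseteq> halfplane \<rho>"
  shows "(\<lambda>N. \<Sum>m\<in>{1..N}. \<Sum>n\<in>{1..N}.
            cnj (comb_vector T c m) * majorant_matrix C a fh m n * comb_vector T c n)
         \<longlonglongrightarrow> (\<Sum>t\<in>T. \<Sum>u\<in>T. c t * cnj (c u) *
                 majorant_kernel C (dkernel a) (\<lambda>s. suminf1 (dir_term fh s)) u t)"
  unfolding kernel_form_rect_sum[symmetric]
  using assms
  by (intro tendsto_intros tendsto_diagonal[of "rect_sum _"] rect_sum_majorant_matrix_tendsto) auto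

lemma psd_kernel_if_formally_psd:
  assumes "dirichlet_series_kernel \<rho> a" "\<forall>s\<in>halfplane \<rho>. summable1 (dir_term fh s)"
    and "formally_psd (majorant_matrix C a fh)"
  shows "psd_kernel (halfplane \<rho>) (majorant_kernel C (dkernel a) (\<lambda>s. suminf1 (dir_term fh s)))"
  unfolding psd_kernel_def
proof (intro allI impI)
  fix T c
  assume "finite T \<and> T \<subseteq> halfplane \<rho>"
  with assms(3) show "cnonneg (\<Sum>t\<in>T. \<Sum>u\<in>T. c t * cnj (c u) *
      majorant_kernel C (dkernel a) (\<lambda>s. suminf1 (dir_term fh s)) u t)"
    by (intro cnonneg_tendsto[OF quadratic_form_tendsto[OF assms(1,2)]])
      (auto simp: formally_psd_def)
qed

section \<open>Growth of the coefficients\<close>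

lemma summable1_bounded:
  assumes "summable1 g"
  obtains B where "B \<ge> 0" "\<And>n. n \<ge> 1 \<Longrightarrow> norm (g n) \<le> B"
proof -
  obtain B where "B > 0" "\<forall>n. norm (if n = 0 then 0 else g n) \<le> B"
    using summable_imp_Bseq[OF assms[unfolded summable1_def]] by (rule BseqE)
  then have "norm (g n) \<le> B" if "n \<ge> 1" for n
    using that by (metis not_one_le_zero)
  with \<open>B > 0\<close> show ?thesis by (intro that[of B]) auto
qed

lemma rect_sum_Suc_difference:
  "b (Suc m) (Suc n) = rect_sum b (Suc m, Suc n) - rect_sum b (m, Suc n) - rect_sum b (Suc m, n) + rect_sum b (m, n)"
  unfolding rect_sum_def by (simp add: sum.distrib)

lemma norm_diff_diff_add_le:
  fixes a b c d :: "'a::real_normed_vector"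
  shows "norm (a - b - c + d) \<le> norm a + norm b + norm c + norm d"
proof -
  have "norm (a - b - c + d) \<le> norm (a - b - c) + norm d" by (rule norm_triangle_ineq)
  also have "norm (a - b - c) \<le> norm (a - b) + norm c" by (rule norm_triangle_ineq4)
  also have "norm (a - b) \<le> norm a + norm b" by (rule norm_triangle_ineq4)
  finally show ?thesis by simp
qed

lemma norm_term_less_if_rect_sums_near:
  assumes near: "\<And>i j. i \<ge> N \<Longrightarrow> j \<ge> N \<Longrightarrow> norm (rect_sum b (i, j) - L) < \<epsilon>"
    and "m > N" "n > N"
  shows "norm (b m n) < 4 * \<epsilon>"
proof -
  define m' n' where "m' = m - 1" and "n' = n - 1"
  have mn: "m = Suc m'" "n = Suc n'" "m' \<ge> N" "n' \<ge> N"
    using assms(2,3) unfolding m'_def n'_def by auto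
  define r where "r i j = rect_sum b (i, j) - L" for i j
  have "b m n = r (Suc m') (Suc n') - r m' (Suc n') - r (Suc m') n' + r m' n'"
    unfolding r_def mn rect_sum_Suc_difference[of b m' n'] by (simp add: algebra_simps)
  also have "norm \<dots> \<le> norm (r (Suc m') (Suc n')) + norm (r m' (Suc n')) + norm (r (Suc m') n') + norm (r m' n')"
    by (rule norm_diff_diff_add_le)
  also have "\<dots> < 4 * \<epsilon>"
    using near[of "Suc m'" "Suc n'"] near[of m' "Suc n'"] near[of "Suc m'" n'] near[of m' n'] mn
    unfolding r_def by simp
  finally show ?thesis .
qed

lemma summable1_rows_bounded:
  assumes "\<And>m. m \<ge> 1 \<Longrightarrow> summable1 (g m)"
  obtains B where "\<And>m. m \<ge> 1 \<Longrightarrow> 0 \<le> B m" "\<And>m n. m \<ge> 1 \<Longrightarrow> n \<ge> 1 \<Longrightarrow> norm (g m n) \<le> B m"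
proof -
  have "\<forall>m\<in>{1..}. \<exists>B. 0 \<le> B \<and> (\<forall>n\<ge>1. norm (g m n) \<le> B)"
    using assms summable1_bounded by (metis atLeast_iff)
  from bchoice[OF this] obtain B where "\<forall>m\<in>{1..}. 0 \<le> B m \<and> (\<forall>n\<ge>1. norm (g m n) \<le> B m)"
    by blast
  with that show ?thesis by auto
qed

text \<open>Far out each term is a second difference of rectangular partial sums; the remaining terms lie
  in finitely many convergent rows and columns.\<close>
lemma regularly_convergent_bounded:
  assumes "regularly_convergent b"
  obtains B where "\<And>m n. m \<ge> 1 \<Longrightarrow> n \<ge> 1 \<Longrightarrow> norm (b m n) \<le> B"
proof -
  obtain L where L: "(rect_sum b \<longlongrightarrow> L) (sequentially \<times>\<^sub>F sequentially)"
    and rows: "\<forall>m\<ge>1. summable1 (\<lambda>n. b m n)" and cols: "\<forall>n\<ge>1. summable1 (\<lambda>m. b m n)"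
    using assms unfolding regularly_convergent_def by blast
  have "eventually (\<lambda>p. dist (rect_sum b p) L < 1) (sequentially \<times>\<^sub>F sequentially)"
    using L by (rule tendstoD) simp
  then obtain N0 where N0: "\<And>m n. m \<ge> N0 \<Longrightarrow> n \<ge> N0 \<Longrightarrow> norm (rect_sum b (m, n) - L) < 1"
    unfolding eventually_prod_sequentially dist_norm by blast
  obtain Br where Br: "\<And>m. m \<ge> 1 \<Longrightarrow> 0 \<le> Br m" "\<And>m n. m \<ge> 1 \<Longrightarrow> n \<ge> 1 \<Longrightarrow> norm (b m n) \<le> Br m"
    using summable1_rows_bounded[of b] rows by blast
  obtain Bc where Bc: "\<And>n. n \<ge> 1 \<Longrightarrow> 0 \<le> Bc n" "\<And>n m. n \<ge> 1 \<Longrightarrow> m \<ge> 1 \<Longrightarrow> norm (b m n) \<le> Bc n"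
    using summable1_rows_bounded[of "\<lambda>n m. b m n"] cols by blast
  have "norm (b m n) \<le> 4 + (\<Sum>i\<in>{1..N0}. Br i) + (\<Sum>j\<in>{1..N0}. Bc j)" if "m \<ge> 1" "n \<ge> 1" for m n
  proof -
    have sums: "0 \<le> (\<Sum>i\<in>{1..N0}. Br i)" "0 \<le> (\<Sum>j\<in>{1..N0}. Bc j)"
      using Br(1) Bc(1) by (auto intro!: sum_nonneg)
    consider "m \<le> N0" | "n \<le> N0" | "m > N0" "n > N0" by linarith
    then show ?thesis
    proof cases
      case 1
      then have "Br m \<le> (\<Sum>i\<in>{1..N0}. Br i)"
        using that Br(1) by (intro member_le_sum) auto
      with Br(2)[OF that] sums show ?thesis by linarith
    next
      case 2
      then have "Bc n \<le> (\<Sum>j\<in>{1..N0}. Bc j)"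
        using that Bc(1) by (intro member_le_sum) auto
      with Bc(2)[OF that(2,1)] sums show ?thesis by linarith
    next
      case 3
      with norm_term_less_if_rect_sums_near[OF N0] sums show ?thesis by fastforce
    qed
  qed
  with that show ?thesis by blast
qed

lemma majorant_matrix_growth:
  assumes ker: "dirichlet_series_kernel \<rho> a" and "\<sigma>\<^sub>0 > \<rho>" and "summable1 (dir_term fh (of_real \<sigma>\<^sub>0))"
  obtains B where "B \<ge> 0"
    "\<And>m n. m \<ge> 1 \<Longrightarrow> n \<ge> 1 \<Longrightarrow> norm (majorant_matrix C a fh m n) \<le> B * (real m powr \<sigma>\<^sub>0 * real n powr \<sigma>\<^sub>0)"
proof -
  have "complex_of_real \<sigma>\<^sub>0 \<in> halfplane \<rho>" using assms(2) unfolding halfplane_def by simp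
  then have rc: "regularly_convergent (dk_term a (of_real \<sigma>\<^sub>0) (cnj (of_real \<sigma>\<^sub>0)))"
    using ker unfolding dirichlet_series_kernel_def by blast
  obtain Ba where Ba: "\<And>m n. m \<ge> 1 \<Longrightarrow> n \<ge> 1 \<Longrightarrow> norm (dk_term a (of_real \<sigma>\<^sub>0) (of_real \<sigma>\<^sub>0) m n) \<le> Ba"
    using regularly_convergent_bounded[OF rc[unfolded complex_cnj_complex_of_real]] by metis
  obtain Bf where Bf: "Bf \<ge> 0" "\<And>n. n \<ge> 1 \<Longrightarrow> norm (dir_term fh (of_real \<sigma>\<^sub>0) n) \<le> Bf"
    using summable1_bounded[OF assms(3)] by blast
  have a_bound: "norm (a m n) \<le> \<bar>Ba\<bar> * (real m powr \<sigma>\<^sub>0 * real n powr \<sigma>\<^sub>0)" if "m \<ge> 1" "n \<ge> 1" for m n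
  proof -
    have "norm (a m n) * (real m powr (- \<sigma>\<^sub>0) * real n powr (- \<sigma>\<^sub>0)) \<le> \<bar>Ba\<bar>"
      using Ba[OF that] unfolding dk_term_def using that by (simp add: norm_mult norm_nat_powr)
    then show ?thesis using that by (simp add: powr_minus field_simps)
  qed
  have f_bound: "norm (fh n) \<le> Bf * real n powr \<sigma>\<^sub>0" if "n \<ge> 1" for n
  proof -
    have "norm (fh n) * real n powr (- \<sigma>\<^sub>0) \<le> Bf"
      using Bf(2)[OF that] unfolding dir_term_def norm_mult norm_nat_powr[OF that] by simp
    then show ?thesis using that by (simp add: powr_minus field_simps)
  qed
  show ?thesis
  proof
    show "0 \<le> \<bar>C\<bar> * \<bar>Ba\<bar> + Bf * Bf" using Bf(1) by simp
    fix m n :: nat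
    assume mn: "m \<ge> 1" "n \<ge> 1"
    have "norm (majorant_matrix C a fh m n) \<le> \<bar>C\<bar> * norm (a m n) + norm (fh m) * norm (fh n)"
      unfolding majorant_matrix_def
      using norm_triangle_ineq4[of "of_real C * a m n" "fh m * cnj (fh n)"] by (simp add: norm_mult)
    also have "\<dots> \<le> \<bar>C\<bar> * (\<bar>Ba\<bar> * (real m powr \<sigma>\<^sub>0 * real n powr \<sigma>\<^sub>0)) + (Bf * real m powr \<sigma>\<^sub>0) * (Bf * real n powr \<sigma>\<^sub>0)"
    proof (rule add_mono)
      show "\<bar>C\<bar> * norm (a m n) \<le> \<bar>C\<bar> * (\<bar>Ba\<bar> * (real m powr \<sigma>\<^sub>0 * real n powr \<sigma>\<^sub>0))"
        using a_bound[OF mn] by (rule mult_left_mono) simp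
      show "norm (fh m) * norm (fh n) \<le> (Bf * real m powr \<sigma>\<^sub>0) * (Bf * real n powr \<sigma>\<^sub>0)"
        using f_bound[OF mn(1)] f_bound[OF mn(2)] by (rule mult_mono) (simp_all add: Bf(1))
    qed
    finally show "norm (majorant_matrix C a fh m n) \<le> (\<bar>C\<bar> * \<bar>Ba\<bar> + Bf * Bf) * (real m powr \<sigma>\<^sub>0 * real n powr \<sigma>\<^sub>0)"
      by (simp add: algebra_simps)
  qed
qed

section \<open>Recovering the matrix from the kernel\<close>

definition power_mean :: "nat \<Rightarrow> complex \<Rightarrow> complex"
  where "power_mean J q = (\<Sum>j<J. q ^ j) / of_nat J"

lemma norm_power_mean_le:
  assumes "norm q = 1"
  shows "norm (power_mean J q) \<le> 1"
proof (cases "J = 0")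
  case False
  have "norm (\<Sum>j<J. q ^ j) \<le> real J"
    using norm_sum[of "\<lambda>j. q ^ j" "{..<J}"] assms by (simp add: norm_power)
  with False show ?thesis
    unfolding power_mean_def by (simp add: norm_divide field_simps)
qed (simp add: power_mean_def)

lemma power_mean_tendsto:
  assumes "norm q = 1"
  shows "(\<lambda>J. power_mean J q) \<longlonglongrightarrow> (if q = 1 then 1 else 0)"
proof (cases "q = 1")
  case True
  have "eventually (\<lambda>J. power_mean J q = 1) sequentially"
    unfolding eventually_sequentially using True by (intro exI[of _ 1]) (simp add: power_mean_def)
  with True show ?thesis
    by (simp add: tendsto_eventually)
next
  case False
  have bound: "\<forall>J. norm (power_mean J q) \<le> (2 / norm (1 - q)) / real J"
  proof
    fix J
    have "norm (\<Sum>j<J. q ^ j) = norm (1 - q ^ J) / norm (1 - q)"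
      using False by (simp add: sum_gp_strict norm_divide)
    also have "\<dots> \<le> 2 / norm (1 - q)"
      using norm_triangle_ineq4[of 1 "q ^ J"] assms by (intro divide_right_mono) (auto simp: norm_power)
    finally show "norm (power_mean J q) \<le> (2 / norm (1 - q)) / real J"
      unfolding power_mean_def norm_divide norm_of_nat by (rule divide_right_mono) simp
  qed
  have "(\<lambda>J. power_mean J q) \<longlonglongrightarrow> 0"
    by (rule Lim_null_comparison[OF always_eventually[OF bound] lim_const_over_n])
  with False show ?thesis by simp
qed

lemma power_mean_combination_tendsto:
  assumes "finite F" "\<And>p. p \<in> F \<Longrightarrow> norm (q p) = 1" "\<And>p. p \<in> F \<Longrightarrow> q p = 1 \<longleftrightarrow> p = n"
  shows "(\<lambda>J. \<Sum>p\<in>F. w p * power_mean J (q p)) \<longlonglongrightarrow> (if n \<in> F then w n else 0)"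
proof -
  have "(\<lambda>J. \<Sum>p\<in>F. w p * power_mean J (q p)) \<longlonglongrightarrow> (\<Sum>p\<in>F. w p * (if q p = 1 then 1 else 0))"
    by (intro tendsto_intros power_mean_tendsto assms(2))
  also have "(\<Sum>p\<in>F. w p * (if q p = 1 then 1 else 0)) = (\<Sum>p\<in>F. if p = n then w p else 0)"
    using assms(3) by (intro sum.cong) auto
  also have "\<dots> = (if n \<in> F then w n else 0)"
    using assms(1) by simp
  finally show ?thesis .
qed

lemma norm_power_mean_combination_le:
  assumes "\<And>p. p \<in> F \<Longrightarrow> norm (q p) = 1"
  shows "norm (\<Sum>p\<in>F. w p * power_mean J (q p)) \<le> (\<Sum>p\<in>F. norm (w p))"
  using norm_power_mean_le[OF assms] by (intro order_trans[OF norm_sum] sum_mono)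
    (auto simp: norm_mult intro: mult_left_le)

lemma exists_injective_imaginary_power:
  obtains h :: real where "h > 0" "inj_on (\<lambda>n::nat. exp (\<i> * of_real (h * ln (real n)))) {1..}"
proof -
  define bad where
    "bad = (\<lambda>(n, p, k). 2 * pi * real_of_int k / (ln (real n) - ln (real p))) ` (UNIV :: (nat \<times> nat \<times> int) set)"
  have "countable bad"
    unfolding bad_def by simp
  then have "\<not> {0<..<(1::real)} \<subseteq> bad"
    using uncountable_open_interval[of 0 "1::real"] countable_subset by auto
  then obtain h where h: "h \<in> {0<..<1}" "h \<notin> bad"
    by blast
  have "inj_on (\<lambda>n::nat. exp (\<i> * of_real (h * ln (real n)))) {1..}"
  proof (rule inj_onI, rule ccontr)
    fix n p :: nat
    assume np: "n \<in> {1..}" "p \<in> {1..}" "n \<noteq> p"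
      and "exp (\<i> * of_real (h * ln (real n))) = exp (\<i> * of_real (h * ln (real p)))"
    then obtain k :: int where "\<i> * of_real (h * ln (real n)) = \<i> * of_real (h * ln (real p)) + of_int (2 * k) * pi * \<i>"
      unfolding exp_eq by blast
    then have "h * (ln (real n) - ln (real p)) = 2 * pi * real_of_int k"
      by (simp add: complex_eq_iff algebra_simps)
    moreover have "ln (real n) \<noteq> ln (real p)"
      using np by simp
    ultimately have "h = 2 * pi * real_of_int k / (ln (real n) - ln (real p))"
      by (simp add: field_simps)
    then have "h \<in> bad"
      unfolding bad_def by (intro image_eqI[of _ _ "(n, p, k)"]) auto
    with h show False by blast
  qed
  with h that show ?thesis by auto
qed

lemma nat_powr_vertical_point:
  assumes "n \<ge> 1"
  shows "of_nat n powr (- cnj (of_real \<sigma> + \<i> * of_real (h * real j))) =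
         of_real (real n powr (- \<sigma>)) * exp (\<i> * of_real (h * ln (real n))) ^ j"
proof -
  have "of_nat n powr (- cnj (of_real \<sigma> + \<i> * of_real (h * real j))) =
        exp (of_real (- \<sigma> * ln (real n)) + of_nat j * (\<i> * of_real (h * ln (real n))))"
    unfolding powr_def using assms by (simp add: algebra_simps)
  also have "\<dots> = exp (of_real (- \<sigma> * ln (real n))) * exp (\<i> * of_real (h * ln (real n))) ^ j"
    by (simp only: exp_add exp_of_nat_mult)
  also have "exp (of_real (- \<sigma> * ln (real n))) = (of_real (real n powr (- \<sigma>)) :: complex)"
    using assms by (simp add: powr_def flip: exp_of_real)
  finally show ?thesis .
qed

lemma comb_vector_vertical_grid:
  assumes "h > 0" "n \<ge> 1"
  shows "comb_vector ((\<lambda>j. of_real \<sigma> + \<i> * of_real (h * real j)) ` {..<J}) (\<lambda>s. b (nat \<lfloor>Im s / h\<rfloor>)) n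
    = of_real (real n powr (- \<sigma>)) * (\<Sum>j<J. b j * exp (\<i> * of_real (h * ln (real n))) ^ j)"
proof -
  have "inj_on (\<lambda>j. of_real \<sigma> + \<i> * of_real (h * real j)) {..<J}"
    unfolding inj_on_def using assms(1) by (auto simp: complex_eq_iff)
  then have "comb_vector ((\<lambda>j. of_real \<sigma> + \<i> * of_real (h * real j)) ` {..<J}) (\<lambda>s. b (nat \<lfloor>Im s / h\<rfloor>)) n
      = (\<Sum>j<J. b j * of_nat n powr (- cnj (of_real \<sigma> + \<i> * of_real (h * real j))))"
    unfolding comb_vector_def using assms(1) by (simp add: sum.reindex)
  also have "\<dots> = of_real (real n powr (- \<sigma>)) * (\<Sum>j<J. b j * exp (\<i> * of_real (h * ln (real n))) ^ j)"
    unfolding nat_powr_vertical_point[OF assms(2)] sum_distrib_left by (simp add: mult_ac)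
  finally show ?thesis .
qed

text \<open>Averaging over the points \<open>t\<^sub>j = \<sigma> + i h j\<close>, \<open>j < J\<close>, against \<open>(p\<^bsup>-ih\<^esup>)\<^sup>j\<close> isolates the index
  \<open>n = p\<close>, because \<open>h\<close> is chosen so that \<open>n \<mapsto> n\<^bsup>ih\<^esup>\<close> is injective; the coefficient at \<open>t\<^sub>j\<close> reads
  off \<open>j\<close> as \<open>\<lfloor>Im t\<^sub>j / h\<rfloor>\<close>.\<close>
lemma vertical_test_vectors:
  fixes \<sigma> :: real and v :: "nat \<Rightarrow> complex"
  assumes "finite F" "F \<subseteq> {1..}"
  obtains P :: "nat \<Rightarrow> complex set" and c :: "nat \<Rightarrow> complex \<Rightarrow> complex" and W :: real
  where "\<And>J. finite (P J)" "\<And>J t. t \<in> P J \<Longrightarrow> Re t = \<sigma>"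
    "\<And>n. n \<ge> 1 \<Longrightarrow> (\<lambda>J. comb_vector (P J) (c J) n) \<longlonglongrightarrow> (if n \<in> F then v n else 0)"
    "\<And>J n. n \<ge> 1 \<Longrightarrow> norm (comb_vector (P J) (c J) n) \<le> W * real n powr (- \<sigma>)"
proof -
  obtain h where "h > 0" and inj: "inj_on (\<lambda>n::nat. exp (\<i> * of_real (h * ln (real n)))) {1..}"
    by (rule exists_injective_imaginary_power)
  define z where "z n = exp (\<i> * of_real (h * ln (real n)))" for n :: nat
  define w where "w p = v p * of_real (real p powr \<sigma>)" for p
  define P where "P J = (\<lambda>j. of_real \<sigma> + \<i> * of_real (h * real j)) ` {..<J}" for J
  define c where "c J s = (\<Sum>p\<in>F. w p * cnj (z p) ^ nat \<lfloor>Im s / h\<rfloor>) / of_nat J" for J s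
  define W where "W = (\<Sum>p\<in>F. norm (w p))"
  have norm_z: "norm (cnj (z p) * z n) = 1" for p n
    unfolding z_def by (simp add: norm_mult)
  have z_eq_1: "cnj (z p) * z n = 1 \<longleftrightarrow> p = n" if "p \<ge> 1" "n \<ge> 1" for p n
  proof -
    have "cnj (z p) * z n = z n / z p"
      unfolding z_def by (simp add: exp_cnj exp_diff[symmetric] field_simps flip: exp_add)
    then show ?thesis
      using inj_onD[OF inj, of n p] that unfolding z_def by (auto simp: z_def)
  qed
  have V: "comb_vector (P J) (c J) n
      = of_real (real n powr (- \<sigma>)) * (\<Sum>p\<in>F. w p * power_mean J (cnj (z p) * z n))" if "n \<ge> 1" for J n
    using comb_vector_vertical_grid[OF \<open>h > 0\<close> that, of \<sigma> J "\<lambda>j. (\<Sum>p\<in>F. w p * cnj (z p) ^ j) / of_nat J"]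
    unfolding P_def c_def power_mean_def z_def[symmetric]
    by (simp add: power_mult_distrib sum_divide_distrib sum_distrib_left sum_distrib_right mult_ac
        sum.swap[of _ F "{..<J}"])
  show ?thesis
  proof
    show "finite (P J)" for J
      unfolding P_def by simp
    show "Re s = \<sigma>" if "s \<in> P J" for J s
      using that unfolding P_def by auto
    show "(\<lambda>J. comb_vector (P J) (c J) n) \<longlonglongrightarrow> (if n \<in> F then v n else 0)" if "n \<ge> 1" for n
    proof -
      have "(\<lambda>J. comb_vector (P J) (c J) n)
          \<longlonglongrightarrow> of_real (real n powr (- \<sigma>)) * (if n \<in> F then w n else 0)"
        unfolding V[OF that] using assms(2) z_eq_1 that
        by (intro tendsto_intros power_mean_combination_tendsto assms(1) norm_z) auto
      also have "of_real (real n powr (- \<sigma>)) * (if n \<in> F then w n else 0) = (if n \<in> F then v n else 0)"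
        unfolding w_def using that by (simp add: powr_minus field_simps)
      finally show ?thesis .
    qed
    show "norm (comb_vector (P J) (c J) n) \<le> W * real n powr (- \<sigma>)" if "n \<ge> 1" for J n
      using norm_power_mean_combination_le[of F "\<lambda>p. cnj (z p) * z n" w J] norm_z
      unfolding V[OF that] W_def norm_mult by (simp add: mult.commute mult_left_mono)
  qed
qed

lemma integrable_powr_minus_two_pairs:
  "integrable (count_space UNIV) (\<lambda>p::nat \<times> nat. real (fst p) powr (-2) * real (snd p) powr (-2))"
proof -
  define u where "u n = real n powr (-2)" for n :: nat
  have u_nonneg: "u n \<ge> 0" for n
    unfolding u_def by simp
  have "summable u"
    unfolding u_def using summable_real_powr_iff[of "-2"] by simp
  then have int_u: "integrable (count_space UNIV) u"
    unfolding integrable_count_space_nat_iff using u_nonneg by simp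
  have "integrable (count_space (Sigma UNIV (\<lambda>_. UNIV))) (\<lambda>p::nat \<times> nat. u (fst p) * u (snd p))"
  proof (subst Infinite_Set_Sum.abs_summable_on_Sigma_iff[unfolded Infinite_Set_Sum.abs_summable_on_def])
    have "infsetsum (\<lambda>y. norm (u x * u y)) UNIV = u x * infsetsum u UNIV" for x
      using u_nonneg int_u
      by (simp add: abs_mult Infinite_Set_Sum.abs_summable_on_def infsetsum_cmult_right)
    then show "(\<forall>x\<in>UNIV. integrable (count_space UNIV) (\<lambda>y. u (fst (x, y)) * u (snd (x, y)))) \<and>
      integrable (count_space UNIV) (\<lambda>x. infsetsum (\<lambda>y. norm (u (fst (x, y)) * u (snd (x, y)))) UNIV)"
      using int_u by auto
  qed auto
  then show ?thesis
    unfolding u_def by simp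
qed

lemma integral_count_space_indicator:
  fixes \<phi> :: "'a \<Rightarrow> 'b::{banach, second_countable_topology}"
  assumes "finite S"
  shows "integral\<^sup>L (count_space UNIV) (\<lambda>p. indicator S p *\<^sub>R \<phi> p) = sum \<phi> S"
  using infsetsum_altdef[of \<phi> S] infsetsum_finite[OF assms, of \<phi>]
  unfolding set_lebesgue_integral_def by simp

lemma square_sums_tendsto_integral:
  fixes g :: "nat \<Rightarrow> nat \<Rightarrow> complex" and Y :: "nat \<times> nat \<Rightarrow> real"
  assumes Y: "integrable (count_space UNIV) Y"
    and bound: "\<And>m n. m \<ge> 1 \<Longrightarrow> n \<ge> 1 \<Longrightarrow> norm (g m n) \<le> Y (m, n)"
  shows "(\<lambda>N. \<Sum>m\<in>{1..N}. \<Sum>n\<in>{1..N}. g m n)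
    \<longlonglongrightarrow> integral\<^sup>L (count_space UNIV) (\<lambda>p. indicator ({1..} \<times> {1..}) p *\<^sub>R g (fst p) (snd p))"
proof -
  define I :: "(nat \<times> nat) set" where "I = {1..} \<times> {1..}"
  define S where "S N = {1..N} \<times> {1..N}" for N :: nat
  have "(\<lambda>N. integral\<^sup>L (count_space UNIV) (\<lambda>p. indicator (S N) p *\<^sub>R g (fst p) (snd p)))
      \<longlonglongrightarrow> integral\<^sup>L (count_space UNIV) (\<lambda>p. indicator I p *\<^sub>R g (fst p) (snd p))"
  proof (rule integral_dominated_convergence)
    show "integrable (count_space UNIV) (\<lambda>p. Y p * indicator I p)"
      by (rule integrable_real_mult_indicator) (simp_all add: Y)
    show "AE p in count_space UNIV. (\<lambda>N. indicator (S N) p *\<^sub>R g (fst p) (snd p))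
        \<longlonglongrightarrow> indicator I p *\<^sub>R g (fst p) (snd p)"
    proof (rule AE_I2)
      fix p :: "nat \<times> nat"
      have "eventually (\<lambda>N. indicator (S N) p = (indicator I p :: real)) sequentially"
        unfolding eventually_sequentially S_def I_def
        by (intro exI[of _ "max (fst p) (snd p)"]) (auto simp: indicator_def)
      then show "(\<lambda>N. indicator (S N) p *\<^sub>R g (fst p) (snd p)) \<longlonglongrightarrow> indicator I p *\<^sub>R g (fst p) (snd p)"
        by (rule tendsto_eventually[OF eventually_mono]) simp
    qed
    show "AE p in count_space UNIV. norm (indicator (S N) p *\<^sub>R g (fst p) (snd p)) \<le> Y p * indicator I p" for N
      unfolding S_def I_def
      by (intro AE_I2) (auto simp: indicator_def bound intro: order_trans[OF norm_ge_zero bound])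
  qed simp_all
  moreover have "integral\<^sup>L (count_space UNIV) (\<lambda>p. indicator (S N) p *\<^sub>R g (fst p) (snd p))
      = (\<Sum>m\<in>{1..N}. \<Sum>n\<in>{1..N}. g m n)" for N
    using integral_count_space_indicator[of "S N" "\<lambda>p. g (fst p) (snd p)"]
    unfolding S_def by (simp add: sum.cartesian_product case_prod_beta)
  ultimately show ?thesis
    unfolding I_def by simp
qed

lemma square_sums_dominated_convergence:
  fixes g :: "nat \<Rightarrow> nat \<Rightarrow> nat \<Rightarrow> complex" and Y :: "nat \<times> nat \<Rightarrow> real"
  assumes Y: "integrable (count_space UNIV) Y"
    and bound: "\<And>J m n. m \<ge> 1 \<Longrightarrow> n \<ge> 1 \<Longrightarrow> norm (g J m n) \<le> Y (m, n)"
    and pointwise: "\<And>m n. m \<ge> 1 \<Longrightarrow> n \<ge> 1 \<Longrightarrow> (\<lambda>J. g J m n) \<longlonglongrightarrow> G m n"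
    and sums: "\<And>J. (\<lambda>N. \<Sum>m\<in>{1..N}. \<Sum>n\<in>{1..N}. g J m n) \<longlonglongrightarrow> Q J"
    and F: "finite F" "F \<subseteq> {1..}"
    and support: "\<And>m n. m \<ge> 1 \<Longrightarrow> n \<ge> 1 \<Longrightarrow> m \<notin> F \<or> n \<notin> F \<Longrightarrow> G m n = 0"
  shows "Q \<longlonglongrightarrow> (\<Sum>m\<in>F. \<Sum>n\<in>F. G m n)"
proof -
  define I :: "(nat \<times> nat) set" where "I = {1..} \<times> {1..}"
  have Q: "Q J = integral\<^sup>L (count_space UNIV) (\<lambda>p. indicator I p *\<^sub>R g J (fst p) (snd p))" for J
    using LIMSEQ_unique[OF sums square_sums_tendsto_integral[OF Y bound]] unfolding I_def by blast
  have "(\<lambda>J. integral\<^sup>L (count_space UNIV) (\<lambda>p. indicator I p *\<^sub>R g J (fst p) (snd p)))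
      \<longlonglongrightarrow> integral\<^sup>L (count_space UNIV) (\<lambda>p. indicator I p *\<^sub>R G (fst p) (snd p))"
  proof (rule integral_dominated_convergence)
    show "integrable (count_space UNIV) (\<lambda>p. Y p * indicator I p)"
      by (rule integrable_real_mult_indicator) (simp_all add: Y)
  qed (use bound pointwise in \<open>auto simp: I_def indicator_def\<close>)
  moreover have "(\<lambda>p. indicator I p *\<^sub>R G (fst p) (snd p)) = (\<lambda>p. indicator (F \<times> F) p *\<^sub>R G (fst p) (snd p))"
    using support F(2) unfolding I_def indicator_def by (force simp: subset_iff)
  ultimately show ?thesis
    using integral_count_space_indicator[OF finite_SigmaI[OF F(1) F(1)], of "\<lambda>p. G (fst p) (snd p)"]
    unfolding Q by (simp add: sum.cartesian_product case_prod_beta)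
qed

lemma norm_sandwiched_entry_le:
  fixes x y A :: complex
  assumes "norm x \<le> W * real m powr (- \<sigma>)" "norm y \<le> W * real n powr (- \<sigma>)"
    and "norm A \<le> B * (real m powr (\<sigma> - 2) * real n powr (\<sigma> - 2))" "W \<ge> 0" "B \<ge> 0"
  shows "norm (cnj x * A * y) \<le> W * W * B * (real m powr (-2) * real n powr (-2))"
proof -
  have "norm (cnj x * A * y) \<le> (W * real m powr (- \<sigma>)) * (B * (real m powr (\<sigma> - 2) * real n powr (\<sigma> - 2)))
      * (W * real n powr (- \<sigma>))"
    unfolding norm_mult complex_mod_cnj using assms by (intro mult_mono) auto
  also have "\<dots> = W * W * B * ((real m powr (- \<sigma>) * real m powr (\<sigma> - 2))
      * (real n powr (- \<sigma>) * real n powr (\<sigma> - 2)))"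
    by (simp add: mult_ac)
  also have "\<dots> = W * W * B * (real m powr (-2) * real n powr (-2))"
    by (simp flip: powr_add)
  finally show ?thesis .
qed

text \<open>The quadratic form of the matrix on \<open>v\<close> is the limit of the quadratic forms of the kernel on
  the vertical test vectors; their decay \<open>n\<^bsup>-\<sigma>\<^esup>\<close> with \<open>\<sigma> = \<rho> + 3\<close> beats the growth
  \<open>(m n)\<^bsup>\<sigma>-2\<^esup>\<close> of the matrix entries, which gives the dominating function.\<close>
lemma formally_psd_if_psd_kernel:
  assumes ker: "dirichlet_series_kernel \<rho> a" and summable: "\<forall>s\<in>halfplane \<rho>. summable1 (dir_term fh s)"
    and psd: "psd_kernel (halfplane \<rho>) (majorant_kernel C (dkernel a) (\<lambda>s. suminf1 (dir_term fh s)))"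
  shows "formally_psd (majorant_matrix C a fh)"
  unfolding formally_psd_def
proof (intro allI impI)
  fix F :: "nat set" and v :: "nat \<Rightarrow> complex"
  assume F: "finite F \<and> F \<subseteq> {1..}"
  define X where "X = majorant_matrix C a fh"
  define \<sigma> where "\<sigma> = \<rho> + 3"
  have "complex_of_real (\<sigma> - 2) \<in> halfplane \<rho>"
    unfolding halfplane_def \<sigma>_def by simp
  then obtain B where B: "B \<ge> 0"
    "\<And>m n. m \<ge> 1 \<Longrightarrow> n \<ge> 1 \<Longrightarrow> norm (X m n) \<le> B * (real m powr (\<sigma> - 2) * real n powr (\<sigma> - 2))"
    using majorant_matrix_growth[OF ker, of "\<sigma> - 2" fh C] summable unfolding X_def \<sigma>_def by auto
  obtain P c W where P: "\<And>J. finite (P J)" "\<And>J t. t \<in> P J \<Longrightarrow> Re t = \<sigma>"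
    and lim: "\<And>n. n \<ge> 1 \<Longrightarrow> (\<lambda>J. comb_vector (P J) (c J) n) \<longlonglongrightarrow> (if n \<in> F then v n else 0)"
    and small: "\<And>J n. n \<ge> 1 \<Longrightarrow> norm (comb_vector (P J) (c J) n) \<le> W * real n powr (- \<sigma>)"
    using vertical_test_vectors[of F \<sigma> v] F by blast
  have "W \<ge> 0"
    using order_trans[OF norm_ge_zero small[of 1 0]] by simp
  have "P J \<subseteq> halfplane \<rho>" for J
    using P(2) unfolding halfplane_def \<sigma>_def by fastforce
  define V where "V J = comb_vector (P J) (c J)" for J
  define Q where "Q J = (\<Sum>t\<in>P J. \<Sum>u\<in>P J. c J t * cnj (c J u) *
      majorant_kernel C (dkernel a) (\<lambda>s. suminf1 (dir_term fh s)) u t)" for J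
  define v' where "v' n = (if n \<in> F then v n else 0)" for n
  have lim_Q: "Q \<longlonglongrightarrow> (\<Sum>m\<in>F. \<Sum>n\<in>F. cnj (v' m) * X m n * v' n)"
  proof (rule square_sums_dominated_convergence)
    show "integrable (count_space UNIV) (\<lambda>p. W * W * B * (real (fst p) powr (-2) * real (snd p) powr (-2)))"
      using integrable_powr_minus_two_pairs by (rule integrable_mult_right)
    show "norm (cnj (V J m) * X m n * V J n) \<le> W * W * B * (real (fst (m, n)) powr (-2) * real (snd (m, n)) powr (-2))"
      if "m \<ge> 1" "n \<ge> 1" for J m n
      using norm_sandwiched_entry_le[OF small[OF that(1)] small[OF that(2)] B(2)[OF that] \<open>W \<ge> 0\<close> B(1)]
      unfolding V_def by simp
    show "(\<lambda>J. cnj (V J m) * X m n * V J n) \<longlonglongrightarrow> cnj (v' m) * X m n * v' n"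
      if "m \<ge> 1" "n \<ge> 1" for m n
      unfolding V_def v'_def by (intro tendsto_intros lim that)
    show "(\<lambda>N. \<Sum>m\<in>{1..N}. \<Sum>n\<in>{1..N}. cnj (V J m) * X m n * V J n) \<longlonglongrightarrow> Q J" for J
      unfolding V_def X_def Q_def using \<open>P J \<subseteq> halfplane \<rho>\<close>
      by (rule quadratic_form_tendsto[OF ker summable])
  qed (use F in \<open>auto simp: v'_def\<close>)
  have "(\<Sum>m\<in>F. \<Sum>n\<in>F. cnj (v' m) * X m n * v' n) = (\<Sum>m\<in>F. \<Sum>n\<in>F. cnj (v m) * X m n * v n)"
    unfolding v'_def by simp
  moreover have "cnonneg (Q J)" for J
    unfolding Q_def using psd_kernelD[OF psd P(1) \<open>P J \<subseteq> halfplane \<rho>\<close>] .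
  ultimately show "cnonneg (\<Sum>m\<in>F. \<Sum>n\<in>F. cnj (v m) * majorant_matrix C a fh m n * v n)"
    using cnonneg_tendsto[OF lim_Q] unfolding X_def by simp
qed

theorem corollary2p8:
  fixes \<rho> :: real and a :: "nat \<Rightarrow> nat \<Rightarrow> complex" and fh :: "nat \<Rightarrow> complex"
  assumes "dirichlet_series_kernel \<rho> a"
    and "psd_kernel (halfplane \<rho>) (dkernel a)"
    and "\<forall>s\<in>halfplane \<rho>. summable1 (dir_term fh s)"
  shows "in_rkhs (halfplane \<rho>) (dkernel a) (\<lambda>s. suminf1 (dir_term fh s)) \<longleftrightarrow>
         (\<exists>c::real. c \<ge> 0 \<and>
            formally_psd (\<lambda>m n. complex_of_real (c\<^sup>2) * a m n - fh m * cnj (fh n)))"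
proof -
  have psd_iff: "psd_kernel (halfplane \<rho>) (majorant_kernel C (dkernel a) (\<lambda>s. suminf1 (dir_term fh s)))
      \<longleftrightarrow> formally_psd (majorant_matrix C a fh)" for C
    using psd_kernel_if_formally_psd[OF assms(1,3)] formally_psd_if_psd_kernel[OF assms(1,3)] by blast
  have "in_rkhs (halfplane \<rho>) (dkernel a) (\<lambda>s. suminf1 (dir_term fh s))
      \<longleftrightarrow> (\<exists>C\<ge>0. formally_psd (majorant_matrix C a fh))"
    unfolding in_rkhs_iff_psd_majorant[OF assms(2)] psd_iff ..
  also have "\<dots> \<longleftrightarrow> (\<exists>c\<ge>0. formally_psd (majorant_matrix (c\<^sup>2) a fh))"
    by (metis real_sqrt_ge_zero real_sqrt_pow2 zero_le_power2)
  finally show ?thesis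
    unfolding majorant_matrix_def[abs_def] by simp
qed

end
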